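(* For every integer $n\ge 1$, $$\Phi^{(2)}[a; bq^n, b'; c, c'; x, y] = \Phi^{(2)}[a; b, b'; c, c'; x, y] + \frac{bx(1-a)}{1-c} \sum_{k=1}^n q^{k-1} \Phi^{(2)}[aq; bq^k, b'; cq, c'; x, y]$$ and $$\Phi^{(2)}[a; bq^{-n}, b'; c, c'; x, y] = \Phi^{(2)}[a; b, b'; c, c'; x, y] - \frac{bx(1-a)}{1-c} \sum_{k=1}^n q^{-k} \Phi^{(2)}[aq; bq^{1-k}, b'; cq, c'; x, y].$$
   Context: Let $q$ be a complex number with $0<|q|<1$. For complex $z$ and integer $m\ge 0$, $(z;q)_m=\prod_{j=0}^{m-1}(1-zq^j)$, with $(z;q)_0=1$. The $q$-Appell function $\Phi^{(2)}$ is $$\Phi^{(2)}[a; b, b'; c, c'; x, y] = \sum_{m, n \geq 0} \frac{(a; q)_{m+n} (b; q)_m (b'; q)_n}{(q; q)_m (q; q)_n (c; q)_m (c'; q)_n} x^m y^n.$$ Identities are understood as identities of power series in $x,y$ (formal, or convergent for small $|x|,|y|$), with complex parameters chosen so that no denominator occurring vanishes. *)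

theory Defs
  imports Complex_Main "HOL-Computational_Algebra.Formal_Power_Series"
begin

definition qpoch :: "complex \<Rightarrow> complex \<Rightarrow> nat \<Rightarrow> complex" where
  "qpoch z q m = (\<Prod>j<m. 1 - z * q ^ j)"

text \<open>The q-Appell function Phi^(2) as a formal power series in two variables,
  realised in C[[y]][[x]]: the outer variable is x (fps_X), the inner one is y.\<close>
definition qAppell2 ::
  "complex \<Rightarrow> complex \<Rightarrow> complex \<Rightarrow> complex \<Rightarrow> complex \<Rightarrow> complex \<Rightarrow> complex fps fps" where
  "qAppell2 q a b b' c c' =
     Abs_fps (\<lambda>m. Abs_fps (\<lambda>n.
        qpoch a q (m + n) * qpoch b q m * qpoch b' q n /
        (qpoch q q m * qpoch q q n * qpoch c q m * qpoch c' q n)))"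

abbreviation fpsx :: "complex fps fps" where "fpsx \<equiv> fps_X"
abbreviation fpsy :: "complex fps fps" where "fpsy \<equiv> fps_const fps_X"
abbreviation cst :: "complex \<Rightarrow> complex fps fps" where "cst z \<equiv> fps_const (fps_const z)"

end

theory Submission imports Defs begin

text \<open>Comparing coefficients, \<open>(bq;q)_(m+1) - (b;q)_(m+1) = b (1 - q^(m+1)) (bq;q)_m\<close>;
  the factor \<open>1 - q^(m+1)\<close> cancels against \<open>(q;q)_(m+1)\<close>, and splitting off the first
  factors of \<open>(a;q)_(m+1+n)\<close> and \<open>(c;q)_(m+1)\<close> yields the contiguous relation
  \<open>\<Phi>[a; bq] - \<Phi>[a; b] = b(1-a)/(1-c) x \<Phi>[aq; bq; cq]\<close>. Both identities follow by
  telescoping it along \<open>b, bq, ..., bq^n\<close> and along \<open>bq^-n, ..., bq^-1, b\<close>.\<close>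

lemma qpoch_Suc: "qpoch z q (Suc m) = qpoch z q m * (1 - z * q ^ m)"
  unfolding qpoch_def by simp

lemma qpoch_Suc_shift: "qpoch z q (Suc m) = (1 - z) * qpoch (z * q) q m"
  unfolding qpoch_def by (subst prod.lessThan_Suc_shift) (simp add: mult.assoc)

lemma qpoch_mult_q_Suc_diff:
  "qpoch (b * q) q (Suc m) - qpoch b q (Suc m) = b * (1 - q ^ Suc m) * qpoch (b * q) q m"
  unfolding qpoch_Suc[of "b * q"] qpoch_Suc_shift[of b] by (simp add: algebra_simps)

lemma qpoch_q_q_nonzero:
  fixes q :: complex
  assumes "norm q < 1"
  shows "qpoch q q m \<noteq> 0"
proof -
  have "norm (q ^ Suc j) < 1" for j
    using assms by (simp add: norm_power power_less_one_iff del: power_Suc)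
  then have "q * q ^ j \<noteq> 1" for j
    by (metis norm_one order.irrefl power_Suc)
  then show ?thesis
    unfolding qpoch_def by (simp add: prod_zero_iff)
qed

lemma fps_nth_cst_fpsx_mult:
  "fps_nth (cst z * fpsx * F) m = (if m = 0 then 0 else fps_const z * fps_nth F (m - 1))"
proof -
  have swap: "cst z * fpsx * F = fpsx * (cst z * F)"
    by (simp add: algebra_simps)
  show ?thesis
    unfolding swap fps_X_mult_nth by simp
qed

lemma cst_mult_fpsx_mult: "cst (u * v) * fpsx * F = cst u * fpsx * (cst v * F)"
proof -
  have "cst (u * v) = cst u * cst v"
    by (simp only: fps_const_mult)
  then show ?thesis
    by (simp only: ac_simps)
qed

lemma qAppell2_nth_nth:
  "fps_nth (fps_nth (qAppell2 q a b b' c c') m) n =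
     qpoch a q (m + n) * qpoch b q m * qpoch b' q n /
     (qpoch q q m * qpoch q q n * qpoch c q m * qpoch c' q n)"
  by (simp add: qAppell2_def)

lemma qAppell2_nth_nth_mult_q_diff:
  assumes q: "norm q < 1" and c: "\<forall>m. qpoch c q m \<noteq> 0" and c': "\<forall>m. qpoch c' q m \<noteq> 0"
  shows "fps_nth (fps_nth (qAppell2 q a (b * q) b' c c') (Suc k)) n
       - fps_nth (fps_nth (qAppell2 q a b b' c c') (Suc k)) n =
     b * (1 - a) / (1 - c) * fps_nth (fps_nth (qAppell2 q (a * q) (b * q) b' (c * q) c') k) n"
proof -
  \<comment> \<open>kept opaque: \<open>field_simps\<close> would expand \<open>1 - q ^ Suc k\<close> and then fail to cancel it\<close>
  define r where "r = 1 - q ^ Suc k"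
  have qpoch_q: "qpoch q q (Suc k) = qpoch q q k * r"
    by (simp add: r_def qpoch_Suc)
  have qpoch_b_diff: "qpoch (b * q) q (Suc k) - qpoch b q (Suc k) = b * r * qpoch (b * q) q k"
    unfolding r_def by (rule qpoch_mult_q_Suc_diff)
  have numerator: "qpoch a q (Suc k + n) * qpoch (b * q) q (Suc k) * qpoch b' q n
      - qpoch a q (Suc k + n) * qpoch b q (Suc k) * qpoch b' q n
      = (1 - a) * qpoch (a * q) q (k + n) * (b * r * qpoch (b * q) q k) * qpoch b' q n"
    unfolding add_Suc qpoch_Suc_shift[of a] qpoch_b_diff[symmetric] by (simp add: algebra_simps)
  have "r \<noteq> 0"
    using qpoch_q_q_nonzero[OF q, of "Suc k"] by (simp add: qpoch_q)
  moreover have "1 - c \<noteq> 0"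
    using c[rule_format, of 1] by (simp add: qpoch_def)
  moreover have "qpoch (c * q) q k \<noteq> 0"
    using c[rule_format, of "Suc k"] by (simp add: qpoch_Suc_shift)
  moreover have "qpoch q q k \<noteq> 0" "qpoch q q n \<noteq> 0" "qpoch c' q n \<noteq> 0"
    using qpoch_q_q_nonzero[OF q] c' by auto
  ultimately show ?thesis
    unfolding qAppell2_nth_nth diff_divide_distrib[symmetric] numerator qpoch_q qpoch_Suc_shift[of c]
    by (simp add: field_simps)
qed

lemma qAppell2_mult_q_diff:
  assumes q: "norm q < 1" and c: "\<forall>m. qpoch c q m \<noteq> 0" and c': "\<forall>m. qpoch c' q m \<noteq> 0"
  shows "qAppell2 q a (b * q) b' c c' - qAppell2 q a b b' c c' =
     cst (b * (1 - a) / (1 - c)) * fpsx * qAppell2 q (a * q) (b * q) b' (c * q) c'"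
    (is "?L = ?R")
proof (rule fps_ext)
  fix m
  show "fps_nth ?L m = fps_nth ?R m"
  proof (cases m)
    case 0
    then show ?thesis
      by (simp add: qAppell2_def qpoch_def fps_nth_cst_fpsx_mult)
  next
    case (Suc k)
    show ?thesis
      by (rule fps_ext) (simp only: Suc fps_sub_nth fps_nth_cst_fpsx_mult fps_mult_left_const_nth
          fps_nth_fps_const nat.distinct if_False diff_Suc_1 qAppell2_nth_nth_mult_q_diff[OF assms])
  qed
qed

lemma qAppell2_mult_q_power:
  assumes q: "norm q < 1" and c: "\<forall>m. qpoch c q m \<noteq> 0" and c': "\<forall>m. qpoch c' q m \<noteq> 0"
  shows "qAppell2 q a (b * q ^ n) b' c c' =
     qAppell2 q a b b' c c'
     + cst (b * (1 - a) / (1 - c)) * fpsx *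
       (\<Sum>k=1..n. cst (q ^ (k - 1)) * qAppell2 q (a * q) (b * q ^ k) b' (c * q) c')"
proof -
  let ?K = "b * (1 - a) / (1 - c)"
  have step: "qAppell2 q a (b * q ^ k) b' c c' - qAppell2 q a (b * q ^ (k - 1)) b' c c' =
      cst ?K * fpsx * (cst (q ^ (k - 1)) * qAppell2 q (a * q) (b * q ^ k) b' (c * q) c')"
    if "k \<in> {1..n}" for k
  proof -
    have "b * q ^ (k - 1) * q = b * q ^ k"
      using that by (cases k) auto
    moreover have "b * q ^ (k - 1) * (1 - a) / (1 - c) = ?K * q ^ (k - 1)"
      by simp
    ultimately show ?thesis
      using qAppell2_mult_q_diff[OF q c c', of a "b * q ^ (k - 1)" b']
      by (simp only: cst_mult_fpsx_mult)
  qed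
  have "qAppell2 q a (b * q ^ n) b' c c' - qAppell2 q a b b' c c' =
      (\<Sum>k=1..n. qAppell2 q a (b * q ^ k) b' c c' - qAppell2 q a (b * q ^ (k - 1)) b' c c')"
    using sum_telescope''[of 0 n "\<lambda>k. qAppell2 q a (b * q ^ k) b' c c'"]
    by (simp only: One_nat_def power_0 mult_1_right)
  also have "\<dots> = cst ?K * fpsx *
      (\<Sum>k=1..n. cst (q ^ (k - 1)) * qAppell2 q (a * q) (b * q ^ k) b' (c * q) c')"
    unfolding sum_distrib_left by (rule sum.cong[OF refl step])
  finally show ?thesis
    by (simp only: diff_eq_eq add.commute)
qed

lemma qAppell2_mult_q_power_int_neg:
  assumes "q \<noteq> 0" and q: "norm q < 1"
    and c: "\<forall>m. qpoch c q m \<noteq> 0" and c': "\<forall>m. qpoch c' q m \<noteq> 0"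
  shows "qAppell2 q a (b * q powi (- int n)) b' c c' =
     qAppell2 q a b b' c c'
     - cst (b * (1 - a) / (1 - c)) * fpsx *
       (\<Sum>k=1..n. cst (q powi (- int k)) * qAppell2 q (a * q) (b * q powi (1 - int k)) b' (c * q) c')"
proof -
  let ?K = "b * (1 - a) / (1 - c)"
  have step: "qAppell2 q a (b * q powi (- int k)) b' c c'
        - qAppell2 q a (b * q powi (- int (k - 1))) b' c c' =
      - (cst ?K * fpsx *
        (cst (q powi (- int k)) * qAppell2 q (a * q) (b * q powi (1 - int k)) b' (c * q) c'))"
    if "k \<in> {1..n}" for k
  proof -
    have "b * q powi (- int k) * q = b * q powi (1 - int k)"
      using power_int_add_1[of q "- int k"] \<open>q \<noteq> 0\<close> by (simp add: mult.assoc)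
    moreover have "b * q powi (- int k) * (1 - a) / (1 - c) = ?K * q powi (- int k)"
      by simp
    ultimately have "qAppell2 q a (b * q powi (1 - int k)) b' c c'
        - qAppell2 q a (b * q powi (- int k)) b' c c' =
      cst ?K * fpsx *
        (cst (q powi (- int k)) * qAppell2 q (a * q) (b * q powi (1 - int k)) b' (c * q) c')"
      using qAppell2_mult_q_diff[OF q c c', of a "b * q powi (- int k)" b']
      by (simp only: cst_mult_fpsx_mult)
    moreover have "- int (k - 1) = 1 - int k"
      using that by auto
    ultimately show ?thesis
      by (metis minus_diff_eq)
  qed
  have "qAppell2 q a (b * q powi (- int n)) b' c c' - qAppell2 q a b b' c c' =
      (\<Sum>k=1..n. qAppell2 q a (b * q powi (- int k)) b' c c'
        - qAppell2 q a (b * q powi (- int (k - 1))) b' c c')"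
    using sum_telescope''[of 0 n "\<lambda>k. qAppell2 q a (b * q powi (- int k)) b' c c'"]
    by (simp only: One_nat_def of_nat_0 minus_zero power_int_0_right mult_1_right)
  also have "\<dots> = - (cst ?K * fpsx *
      (\<Sum>k=1..n. cst (q powi (- int k)) * qAppell2 q (a * q) (b * q powi (1 - int k)) b' (c * q) c'))"
    unfolding sum_distrib_left sum_negf[symmetric] by (rule sum.cong[OF refl step])
  finally have "qAppell2 q a (b * q powi (- int n)) b' c c' = - (cst ?K * fpsx *
      (\<Sum>k=1..n. cst (q powi (- int k)) * qAppell2 q (a * q) (b * q powi (1 - int k)) b' (c * q) c'))
      + qAppell2 q a b b' c c'"
    by (rule diff_eq_eq[THEN iffD1])
  then show ?thesis
    by (simp only: uminus_add_conv_diff)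
qed

theorem theorem8:
  fixes q a b b' c c' :: complex and n :: nat
  assumes "0 < norm q" "norm q < 1"
    and "\<forall>m. qpoch c q m \<noteq> 0" and "\<forall>m. qpoch c' q m \<noteq> 0"
    and "n \<ge> 1"
  shows "(qAppell2 q a (b * q ^ n) b' c c' =
           qAppell2 q a b b' c c'
           + cst (b * (1 - a) / (1 - c)) * fpsx *
             (\<Sum>k=1..n. cst (q ^ (k - 1)) * qAppell2 q (a * q) (b * q ^ k) b' (c * q) c')) \<and>
         (qAppell2 q a (b * q powi (- int n)) b' c c' =
           qAppell2 q a b b' c c'
           - cst (b * (1 - a) / (1 - c)) * fpsx *
             (\<Sum>k=1..n. cst (q powi (- int k)) * qAppell2 q (a * q) (b * q powi (1 - int k)) b' (c * q) c'))"
proof -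
  have "q \<noteq> 0"
    using assms(1) by auto
  then show ?thesis
    by (intro conjI qAppell2_mult_q_power[OF assms(2-4)]
        qAppell2_mult_q_power_int_neg[OF _ assms(2-4)])
qed

end
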